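(* Let $\lambda=(\lambda_1,\dots,\lambda_n)$ be a composition of $N$ with positive parts and $\lambda_1\le\cdots\le\lambda_n$. Let $0\ne\mu\subseteq\lambda$ with $\ell(\mu)=d_{|\mu|}=:d$, and let $1\le i_1<\cdots<i_d\le n$ be the positions of the non-zero parts of $\mu$. Then for every $w\in S_d$ and every $j=1,\dots,d$ we have $\mu_{i_j}>\lambda_{i_j}-\min(\lambda_{i_{wj}},\lambda_{i_j})$.
   Context: $(d_1,\dots,d_N)$ is the sequence consisting of $\lambda_n$ copies of $1$, followed by $\lambda_{n-1}$ copies of $2$, ..., followed by $\lambda_1$ copies of $n$. For a composition $\mu=(\mu_1,\dots,\mu_n)$, $\mu\subseteq\lambda$ means $0\le\mu_i\le\lambda_i$ for all $i$, $|\mu|=\sum_i\mu_i$, and $\ell(\mu)$ is the number of non-zero parts. *)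

theory Defs
  imports "HOL-Combinatorics.Permutations"
begin

text \<open>Compositions of length n are functions nat => nat, with parts indexed 1..n.\<close>

text \<open>The sequence (d_1,...,d_N): lam n copies of 1, lam (n-1) copies of 2, ..., lam 1 copies of n
  (as a 0-indexed list).\<close>
definition dseq :: "(nat \<Rightarrow> nat) \<Rightarrow> nat \<Rightarrow> nat list" where
  "dseq lam n = concat (map (\<lambda>m. replicate (lam (n + 1 - m)) m) [1..<Suc n])"

text \<open>d_k, 1-indexed (meaningful for 1 <= k <= N).\<close>
definition d_at :: "(nat \<Rightarrow> nat) \<Rightarrow> nat \<Rightarrow> nat \<Rightarrow> nat" where
  "d_at lam n k = dseq lam n ! (k - 1)"

definition comp_size :: "(nat \<Rightarrow> nat) \<Rightarrow> nat \<Rightarrow> nat" where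
  "comp_size mu n = (\<Sum>i\<in>{1..n}. mu i)"

definition support :: "(nat \<Rightarrow> nat) \<Rightarrow> nat \<Rightarrow> nat set" where
  "support mu n = {i \<in> {1..n}. mu i \<noteq> 0}"

definition comp_len :: "(nat \<Rightarrow> nat) \<Rightarrow> nat \<Rightarrow> nat" where
  "comp_len mu n = card (support mu n)"

text \<open>i_j: position of the j-th non-zero part (1-indexed j).\<close>
definition pos :: "(nat \<Rightarrow> nat) \<Rightarrow> nat \<Rightarrow> nat \<Rightarrow> nat" where
  "pos mu n j = sorted_list_of_set (support mu n) ! (j - 1)"

end

theory Submission
  imports Defs
begin

text \<open>Let \<open>S\<close> be the support of \<open>\<mu>\<close> and \<open>d = |S|\<close>. Since \<open>d\<^bsub>|\<mu>|\<^esub> = d\<close>, the index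
  \<open>|\<mu>|\<close> lies beyond the first \<open>d - 1\<close> blocks of the \<open>d\<close>-sequence, whose total length is the sum of
  the \<open>d - 1\<close> largest parts of \<open>\<lambda>\<close>. For distinct \<open>a, b \<in> S\<close> this gives
  \<open>\<lambda>\<^sub>a + \<lambda>(S - {a,b}) = \<lambda>(S - {b}) < |\<mu>| = \<mu>\<^sub>a + \<mu>(S - {a}) \<le> \<mu>\<^sub>a + \<lambda>\<^sub>b + \<lambda>(S - {a,b})\<close>,
  i.e. \<open>\<lambda>\<^sub>a - \<lambda>\<^sub>b < \<mu>\<^sub>a\<close>; for \<open>a = b\<close> the claim is just \<open>\<mu>\<^sub>a > 0\<close>.\<close>

lemma length_concat_replicate:
  "length (concat (map (\<lambda>m. replicate (f m) m) xs)) = (\<Sum>m\<leftarrow>xs. f m)"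
  by (induction xs) auto

lemma sum_before_concat_replicate_nth:
  fixes f :: "nat \<Rightarrow> nat"
  assumes "i < length (concat (map (\<lambda>m. replicate (f m) m) [a..<b]))"
  shows "(\<Sum>m\<in>{a..<concat (map (\<lambda>m. replicate (f m) m) [a..<b]) ! i}. f m) \<le> i"
  using assms
proof (induction b)
  case 0
  then show ?case by simp
next
  case (Suc b)
  let ?blocks = "concat (map (\<lambda>m. replicate (f m) m) [a..<b])"
  show ?case
  proof (cases "a \<le> b \<and> \<not> i < length ?blocks")
    case True
    then have "concat (map (\<lambda>m. replicate (f m) m) [a..<Suc b]) ! i = b"
      using Suc.prems by (auto simp: nth_append)
    with True show ?thesis
      by (simp add: length_concat_replicate sum_list_distinct_conv_sum_set)
  next
    case False
    then show ?thesis using Suc by (auto simp: nth_append)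
  qed
qed

lemma sum_atLeastLessThan_reflect:
  fixes lam :: "nat \<Rightarrow> 'a::comm_monoid_add"
  assumes "d \<le> Suc n"
  shows "(\<Sum>m\<in>{1..<d}. lam (Suc n - m)) = sum lam {Suc n - (d - 1)..n}"
  by (rule sum.reindex_bij_witness[where i="\<lambda>i. Suc n - i" and j="\<lambda>i. Suc n - i"])
    (use assms in auto)

lemma dseq_eq: "dseq lam n = concat (map (\<lambda>m. replicate (lam (Suc n - m)) m) [1..<Suc n])"
  by (simp add: dseq_def)

lemma length_dseq: "length (dseq lam n) = sum lam {1..n}"
proof -
  have "length (dseq lam n) = (\<Sum>m\<in>{1..<Suc n}. lam (Suc n - m))"
    by (simp add: dseq_eq length_concat_replicate sum_list_distinct_conv_sum_set del: upt_Suc)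
  also have "\<dots> = sum lam {1..n}"
    using sum_atLeastLessThan_reflect[of "Suc n" n lam] by simp
  finally show ?thesis .
qed

lemma set_dseq: "set (dseq lam n) \<subseteq> {1..n}"
  by (auto simp: dseq_def)

lemma sum_largest_parts_before_d_at_less:
  assumes "1 \<le> k" "k \<le> sum lam {1..n}"
  shows "sum lam {Suc n - (d_at lam n k - 1)..n} < k"
proof -
  define d where "d = d_at lam n k"
  have idx: "k - 1 < length (dseq lam n)"
    using assms by (simp add: length_dseq)
  then have "d \<in> {1..n}"
    using nth_mem set_dseq unfolding d_def d_at_def by blast
  have "(\<Sum>m\<in>{1..<d}. lam (Suc n - m)) \<le> k - 1"
    using sum_before_concat_replicate_nth[of "k - 1" "\<lambda>m. lam (Suc n - m)" 1 "Suc n"] idx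
    by (simp add: d_def d_at_def dseq_eq)
  with \<open>d \<in> {1..n}\<close> show ?thesis
    using sum_atLeastLessThan_reflect[of d n lam] assms(1) unfolding d_def by simp
qed

lemma sum_le_sum_largest:
  fixes lam :: "nat \<Rightarrow> 'a::ordered_comm_monoid_add"
  assumes "mono_on {1..n} lam" "S \<subseteq> {1..n}"
  shows "sum lam S \<le> sum lam {Suc n - card S..n}"
  using assms
proof (induction n arbitrary: S)
  case 0
  then show ?case by simp
next
  case (Suc n)
  show ?case
  proof (cases "S = {}")
    case True
    then show ?thesis by simp
  next
    case False
    obtain s where s: "s \<in> S" and rest: "S - {s} \<subseteq> {1..n}"
    proof (cases "Suc n \<in> S")
      case True
      then show ?thesis using Suc.prems(2) that by fastforce
    next
      case False
      then show ?thesis using \<open>S \<noteq> {}\<close> Suc.prems(2) that by (fastforce simp: le_Suc_eq)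
    qed
    have fin: "finite S" and card: "card S \<le> Suc n"
      using Suc.prems(2) finite_subset card_mono[of "{1..Suc n}" S] by auto
    have mono: "mono_on {1..n} lam"
      using Suc.prems(1) by (rule mono_on_subset) auto
    have "sum lam S = lam s + sum lam (S - {s})"
      using s fin by (simp add: sum.remove)
    also have "\<dots> \<le> lam (Suc n) + sum lam {Suc n - card (S - {s})..n}"
      using Suc.IH[OF mono rest] s Suc.prems by (intro add_mono mono_onD[OF Suc.prems(1)]) auto
    also have "\<dots> = sum lam {Suc (Suc n) - card S..Suc n}"
    proof -
      have "{Suc (Suc n) - card S..Suc n} = insert (Suc n) {Suc n - card (S - {s})..n}"
        using s fin card card_gt_0_iff[of S] by (auto simp: card_Diff_singleton)
      then show ?thesis by simp
    qed
    finally show ?thesis .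
  qed
qed

lemma finite_support: "finite (support mu n)"
  and support_subset: "support mu n \<subseteq> {1..n}"
  by (auto simp: support_def)

lemma comp_size_eq_sum_support: "comp_size mu n = sum mu (support mu n)"
  unfolding comp_size_def support_def by (rule sum.mono_neutral_right) auto

lemma pos_in_support:
  assumes "j \<in> {1..comp_len mu n}"
  shows "pos mu n j \<in> support mu n"
proof -
  have "j - 1 < length (sorted_list_of_set (support mu n))"
    using assms by (auto simp: comp_len_def)
  then have "pos mu n j \<in> set (sorted_list_of_set (support mu n))"
    unfolding pos_def by (rule nth_mem)
  then show ?thesis
    using finite_support by simp
qed

lemma part_less_sub_part_plus_part:
  fixes lam mu :: "nat \<Rightarrow> nat"
  assumes mono: "mono_on {1..n} lam"
    and sub: "\<forall>i\<in>{1..n}. mu i \<le> lam i"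
    and len: "comp_len mu n = d_at lam n (comp_size mu n)"
    and a: "a \<in> support mu n" and b: "b \<in> support mu n" and "a \<noteq> b"
  shows "lam a < mu a + lam b"
proof -
  define S where "S = support mu n"
  have fin: "finite S" and S: "S \<subseteq> {1..n}"
    unfolding S_def by (rule finite_support support_subset)+
  have aS: "a \<in> S" and bS: "b \<in> S"
    using a b by (simp_all add: S_def)
  have card: "comp_len mu n = card S"
    by (simp add: S_def comp_len_def)
  have size: "comp_size mu n = mu a + sum mu (S - {a})"
    using aS fin by (simp add: S_def comp_size_eq_sum_support sum.remove)
  have "1 \<le> comp_size mu n"
    using a size by (simp add: support_def)
  moreover have "comp_size mu n \<le> sum lam {1..n}"
    unfolding comp_size_def using sub by (intro sum_mono) auto
  ultimately have top: "sum lam {Suc n - (card S - 1)..n} < comp_size mu n"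
    using len sum_largest_parts_before_d_at_less card by metis
  have "S - {b} = insert a (S - {a, b})" and "S - {a} = insert b (S - {a, b})"
    using aS bS \<open>a \<noteq> b\<close> by auto
  then have remove_a: "sum lam (S - {b}) = lam a + sum lam (S - {a, b})"
    and remove_b: "sum lam (S - {a}) = lam b + sum lam (S - {a, b})"
    using fin by (metis Diff_iff finite_Diff insertCI sum.insert)+
  have "lam a + sum lam (S - {a, b}) \<le> sum lam {Suc n - (card S - 1)..n}"
    using sum_le_sum_largest[OF mono, of "S - {b}"] S bS remove_a by auto
  also have "\<dots> < mu a + sum mu (S - {a})"
    using top size by simp
  also have "\<dots> \<le> mu a + sum lam (S - {a})"
    using S sub by (auto intro!: sum_mono)
  also have "\<dots> = mu a + lam b + sum lam (S - {a, b})"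
    using remove_b by simp
  finally show ?thesis by simp
qed

theorem lemma3p8:
  fixes lam mu :: "nat \<Rightarrow> nat" and n N :: nat
  assumes pos_parts: "\<forall>i\<in>{1..n}. 0 < lam i"
    and mono: "\<forall>i j. 1 \<le> i \<and> i \<le> j \<and> j \<le> n \<longrightarrow> lam i \<le> lam j"
    and N_def: "N = (\<Sum>i\<in>{1..n}. lam i)"
    and sub: "\<forall>i\<in>{1..n}. mu i \<le> lam i"
    and nonzero: "\<exists>i\<in>{1..n}. mu i \<noteq> 0"
    and len: "comp_len mu n = d_at lam n (comp_size mu n)"
  shows "\<forall>w. w permutes {1..comp_len mu n} \<longrightarrow>
           (\<forall>j\<in>{1..comp_len mu n}.
              mu (pos mu n j) > lam (pos mu n j) - min (lam (pos mu n (w j))) (lam (pos mu n j)))"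
proof (intro allI impI ballI)
  fix w j
  assume w: "w permutes {1..comp_len mu n}" and j: "j \<in> {1..comp_len mu n}"
  define a b where "a = pos mu n j" and "b = pos mu n (w j)"
  have a: "a \<in> support mu n" and b: "b \<in> support mu n"
    using pos_in_support j permutes_in_image[OF w] unfolding a_def b_def by auto
  have "mono_on {1..n} lam"
    using mono by (auto intro: mono_onI)
  then have "a \<noteq> b \<Longrightarrow> lam a < mu a + lam b"
    using part_less_sub_part_plus_part sub len a b by blast
  moreover have "0 < mu a"
    using a by (simp add: support_def)
  ultimately show "mu a > lam a - min (lam b) (lam a)"
    by (cases "a = b") auto
qed

end
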